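(* For every $n\ge1$ there exists a surjective open polyhedral map $(0,1)^n\to[0,1]^n$.
   Context: A polyhedron is a finite union of convex hulls of finite subsets of some $\mathbb R^d$; an open subpolyhedron of a polyhedron $P$ is $P\setminus R$ with $R\subseteq P$ a polyhedron, and $\mathrm{Sub}_o P$ denotes the set of these. The cube $[0,1]^n$ is equipped with the basis $\mathrm{Sub}_o[0,1]^n$, and $(0,1)^n$ (an open subpolyhedron of $[0,1]^n$) is equipped with the basis $\mathrm{Sub}_o(0,1)^n:=\{O\cap(0,1)^n: O\in\mathrm{Sub}_o[0,1]^n\}$. A map $g\colon(0,1)^n\to[0,1]^n$ is polyhedral if $g^{-1}[O]\in\mathrm{Sub}_o(0,1)^n$ for every $O\in\mathrm{Sub}_o[0,1]^n$, and open if $g[U]\in\mathrm{Sub}_o[0,1]^n$ for every $U\in\mathrm{Sub}_o(0,1)^n$. *)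

theory Defs
  imports "HOL-Analysis.Analysis"
begin

definition polyhedron :: "'a::euclidean_space set \<Rightarrow> bool" where
  "polyhedron P \<longleftrightarrow>
     (\<exists>F. finite F \<and> (\<forall>S\<in>F. finite S) \<and> P = \<Union> ((\<lambda>S. convex hull S) ` F))"

definition Sub_o :: "'a::euclidean_space set \<Rightarrow> 'a set set" where
  "Sub_o P = {P - R | R. R \<subseteq> P \<and> polyhedron R}"

abbreviation unit_cube :: "(real^'n) set" where
  "unit_cube \<equiv> cbox 0 1"

abbreviation open_unit_cube :: "(real^'n) set" where
  "open_unit_cube \<equiv> box 0 1"

definition Sub_o_open_cube :: "(real^'n) set set" where
  "Sub_o_open_cube = {V \<inter> open_unit_cube | V. V \<in> Sub_o unit_cube}"

definition polyhedral_map :: "(real^'n \<Rightarrow> real^'n) \<Rightarrow> bool" where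
  "polyhedral_map g \<longleftrightarrow>
     (\<forall>V\<in>Sub_o unit_cube. {x \<in> open_unit_cube. g x \<in> V} \<in> Sub_o_open_cube)"

definition open_polyhedral_map :: "(real^'n \<Rightarrow> real^'n) \<Rightarrow> bool" where
  "open_polyhedral_map g \<longleftrightarrow>
     (\<forall>U\<in>Sub_o_open_cube. g ` U \<in> Sub_o unit_cube)"

end

(* The witness applies the zigzag t |-> ||4t - 2| - 1| to every coordinate; it maps
   (0,1)^n onto [0,1]^n and is affine, with invertible linear part, on each of 4^n regions
   cut out by linear inequalities.

   Call a set semilinear if it is a finite union of solution sets of finitely many strict or
   non-strict linear inequalities. Semilinear sets form a Boolean algebra that is stable under
   preimages of affine maps and images of affine bijections, so the zigzag map preserves
   semilinearity under both images and preimages; and the compact semilinear sets are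
   exactly the polyhedra, since the closure of a nonempty solution set is obtained by making
   all inequalities non-strict.

   For preimages, the complement of a polyhedron R in the cube pulls back to the complement
   of [0,1]^n \<inter> g^-1 R, which is compact by continuity. For images, g is open onto the cube,
   so the complement in the cube of the image of an open subpolyhedron is closed and
   semilinear, hence a polyhedron. *)

theory Submission
  imports Defs
begin

type_synonym 'a constraint = "'a \<times> real \<times> bool"

definition holds :: "'a::real_inner \<Rightarrow> 'a constraint \<Rightarrow> bool" where
  "holds x c = (case c of (a, b, strict) \<Rightarrow> if strict then a \<bullet> x < b else a \<bullet> x \<le> b)"

definition solutions :: "'a::real_inner constraint set \<Rightarrow> 'a set" where
  "solutions K = {x. \<forall>c\<in>K. holds x c}"

definition semilinear :: "'a::real_inner set \<Rightarrow> bool" where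
  "semilinear S \<longleftrightarrow> (\<exists>F. finite F \<and> (\<forall>K\<in>F. finite K) \<and> S = \<Union>(solutions ` F))"

lemma semilinear_solutions: "finite K \<Longrightarrow> semilinear (solutions K)"
  unfolding semilinear_def by (intro exI[of _ "{K}"]) auto

lemma semilinear_empty: "semilinear {}"
  unfolding semilinear_def by (intro exI[of _ "{}"]) auto

lemma semilinear_UNIV: "semilinear UNIV"
  using semilinear_solutions[of "{}"] by (simp add: solutions_def)

lemma semilinear_Un:
  assumes "semilinear S" "semilinear T"
  shows "semilinear (S \<union> T)"
proof -
  obtain F G where "finite F" "\<forall>K\<in>F. finite K" "S = \<Union>(solutions ` F)"
    and "finite G" "\<forall>L\<in>G. finite L" "T = \<Union>(solutions ` G)"
    using assms unfolding semilinear_def by blast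
  then show ?thesis
    unfolding semilinear_def by (intro exI[of _ "F \<union> G"]) auto
qed

lemma semilinear_Int:
  fixes S T :: "'a::real_inner set"
  assumes "semilinear S" "semilinear T"
  shows "semilinear (S \<inter> T)"
proof -
  obtain F G :: "'a constraint set set" where F: "finite F" "\<forall>K\<in>F. finite K" "S = \<Union>(solutions ` F)"
    and G: "finite G" "\<forall>L\<in>G. finite L" "T = \<Union>(solutions ` G)"
    using assms unfolding semilinear_def by blast
  have "S \<inter> T = (\<Union>(K, L)\<in>F \<times> G. solutions (K \<union> L))"
    using F(3) G(3) by (auto simp: solutions_def)
  then show ?thesis
    unfolding semilinear_def using F G by (intro exI[of _ "(\<lambda>(K, L). K \<union> L) ` (F \<times> G)"]) auto
qed

lemma semilinear_Union: "finite \<F> \<Longrightarrow> (\<And>S. S \<in> \<F> \<Longrightarrow> semilinear S) \<Longrightarrow> semilinear (\<Union>\<F>)"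
  by (induction \<F> rule: finite_induct) (auto intro: semilinear_Un semilinear_empty)

lemma semilinear_Inter: "finite \<F> \<Longrightarrow> (\<And>S. S \<in> \<F> \<Longrightarrow> semilinear S) \<Longrightarrow> semilinear (\<Inter>\<F>)"
  by (induction \<F> rule: finite_induct) (auto intro: semilinear_Int semilinear_UNIV)

definition negate :: "'a::real_inner constraint \<Rightarrow> 'a constraint" where
  "negate c = (case c of (a, b, strict) \<Rightarrow> (-a, -b, \<not> strict))"

lemma holds_negate: "holds x (negate c) \<longleftrightarrow> \<not> holds x c"
  by (cases c) (auto simp: holds_def negate_def)

lemma semilinear_Compl:
  fixes S :: "'a::real_inner set"
  assumes "semilinear S"
  shows "semilinear (- S)"
proof -
  obtain F :: "'a constraint set set" where F: "finite F" "\<forall>K\<in>F. finite K" "S = \<Union>(solutions ` F)"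
    using assms unfolding semilinear_def by blast
  have Compl_solutions: "- solutions K = (\<Union>c\<in>K. solutions {negate c})" for K :: "'a constraint set"
    by (auto simp: solutions_def holds_negate)
  have "- S = (\<Inter>K\<in>F. - solutions K)"
    using F(3) by blast
  also have "\<dots> = (\<Inter>K\<in>F. \<Union>c\<in>K. solutions {negate c})"
    by (simp only: Compl_solutions)
  finally show ?thesis
    using F(1,2) by (auto intro!: semilinear_Inter semilinear_Union semilinear_solutions)
qed

lemma semilinear_Diff: "semilinear S \<Longrightarrow> semilinear T \<Longrightarrow> semilinear (S - T)"
  by (simp add: Diff_eq semilinear_Compl semilinear_Int)

lemma semilinear_halfspace_le: "semilinear {x. a \<bullet> x \<le> b}"
  using semilinear_solutions[of "{(a, b, False)}"] by (simp add: solutions_def holds_def)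

lemma semilinear_halfspace_lt: "semilinear {x. a \<bullet> x < b}"
  using semilinear_solutions[of "{(a, b, True)}"] by (simp add: solutions_def holds_def)

lemma semilinear_halfspace_ge: "semilinear {x. b \<le> a \<bullet> x}"
proof -
  have "{x. b \<le> a \<bullet> x} = - {x. a \<bullet> x < b}" by auto
  then show ?thesis by (simp add: semilinear_Compl semilinear_halfspace_lt)
qed

lemma semilinear_halfspace_gt: "semilinear {x. b < a \<bullet> x}"
proof -
  have "{x. b < a \<bullet> x} = - {x. a \<bullet> x \<le> b}" by auto
  then show ?thesis by (simp add: semilinear_Compl semilinear_halfspace_le)
qed

lemma semilinear_cbox: "semilinear (cbox a b)"
proof -
  have "cbox a b = (\<Inter>i\<in>Basis. {x. a \<bullet> i \<le> i \<bullet> x} \<inter> {x. i \<bullet> x \<le> b \<bullet> i})"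
    by (auto simp: mem_box inner_commute)
  then show ?thesis
    by (auto intro!: semilinear_Inter semilinear_Int semilinear_halfspace_le semilinear_halfspace_ge)
qed

lemma semilinear_box: "semilinear (box a b)"
proof -
  have "box a b = (\<Inter>i\<in>Basis. {x. a \<bullet> i < i \<bullet> x} \<inter> {x. i \<bullet> x < b \<bullet> i})"
    by (auto simp: mem_box inner_commute)
  then show ?thesis
    by (auto intro!: semilinear_Inter semilinear_Int semilinear_halfspace_lt semilinear_halfspace_gt)
qed

lemma semilinear_coordinate_halfspace: "semilinear {x::real^'n. c \<le> a * x $ i}"
proof -
  have "{x::real^'n. c \<le> a * x $ i} = {x. c \<le> axis i a \<bullet> x}"
    by (simp add: inner_commute[of "axis i a"] inner_axis mult.commute)
  then show ?thesis
    by (simp add: semilinear_halfspace_ge)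
qed

lemma semilinear_affine_vimage:
  fixes f :: "'a::euclidean_space \<Rightarrow> 'b::euclidean_space"
  assumes "linear f" "semilinear S"
  shows "semilinear ((\<lambda>x. f x + c) -` S)"
proof -
  obtain F :: "'b constraint set set" where F: "finite F" "\<forall>K\<in>F. finite K" "S = \<Union>(solutions ` F)"
    using assms(2) unfolding semilinear_def by blast
  define pull where "pull = (\<lambda>(a, b, strict::bool). (adjoint f a, b - a \<bullet> c, strict))"
  have "holds (f x + c) k \<longleftrightarrow> holds x (pull k)" for x k
    by (cases k) (auto simp: holds_def pull_def inner_add_right adjoint_clauses[OF assms(1)]
        inner_commute[of _ "f x"])
  then have "(\<lambda>x. f x + c) -` solutions K = solutions (pull ` K)" for K
    by (auto simp: solutions_def)
  then have "(\<lambda>x. f x + c) -` S = \<Union>(solutions ` (image pull ` F))"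
    using F(3) by auto
  then show ?thesis
    unfolding semilinear_def using F(1,2) by (intro exI[of _ "image pull ` F"]) auto
qed

lemma semilinear_affine_image:
  fixes f :: "'a::euclidean_space \<Rightarrow> 'a"
  assumes "linear f" "inj f" "semilinear S"
  shows "semilinear ((\<lambda>x. f x + c) ` S)"
proof -
  obtain f' where f': "linear f'" "\<And>x. f' (f x) = x" "\<And>y. f (f' y) = y"
    using linear_injective_isomorphism[OF assms(1,2)] by auto
  have "(\<lambda>x. f x + c) ` S = (\<lambda>y. f' y + (- f' c)) -` S"
  proof (intro set_eqI iffI)
    fix y assume "y \<in> (\<lambda>x. f x + c) ` S"
    then show "y \<in> (\<lambda>y. f' y + (- f' c)) -` S"
      using f' by (auto simp: linear_add)
  next
    fix y assume "y \<in> (\<lambda>y. f' y + (- f' c)) -` S"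
    moreover have "y = f (f' y + (- f' c)) + c"
      using f' assms(1) by (simp add: linear_diff)
    ultimately show "y \<in> (\<lambda>x. f x + c) ` S" by blast
  qed
  then show ?thesis
    using semilinear_affine_vimage[OF f'(1) assms(3), of "- f' c"] by simp
qed

lemma holds_segment:
  assumes "holds p c" "fst c \<bullet> q \<le> fst (snd c)" "0 \<le> u" "u < 1"
  shows "holds ((1 - u) *\<^sub>R p + u *\<^sub>R q) c"
proof -
  obtain a b strict where c: "c = (a, b, strict)" by (cases c)
  have "a \<bullet> ((1 - u) *\<^sub>R p + u *\<^sub>R q) = (1 - u) * (a \<bullet> p) + u * (a \<bullet> q)"
    by (simp add: inner_add_right)
  moreover have "u * (a \<bullet> q) \<le> u * b"
    using assms(2,3) c by (simp add: mult_left_mono)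
  moreover have "(1 - u) * (a \<bullet> p) < (1 - u) * b" if "a \<bullet> p < b"
    using that assms(4) by simp
  moreover have "(1 - u) * (a \<bullet> p) \<le> (1 - u) * b" if "a \<bullet> p \<le> b"
    using that assms(4) by (simp add: mult_left_mono)
  ultimately show ?thesis
    using assms(1) by (auto simp: c holds_def algebra_simps split: if_splits)
qed

lemma closure_solutions:
  fixes K :: "'a::euclidean_space constraint set"
  assumes "solutions K \<noteq> {}"
  shows "closure (solutions K) = {x. \<forall>(a, b, _)\<in>K. a \<bullet> x \<le> b}"
proof
  have "closed {x. \<forall>(a, b, _)\<in>K. a \<bullet> x \<le> b}"
    by (auto simp: case_prod_beta Collect_ball_eq intro!: closed_halfspace_le)
  moreover have "solutions K \<subseteq> {x. \<forall>(a, b, _)\<in>K. a \<bullet> x \<le> b}"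
    by (auto simp: solutions_def holds_def split: if_splits)
  ultimately show "closure (solutions K) \<subseteq> {x. \<forall>(a, b, _)\<in>K. a \<bullet> x \<le> b}"
    by (rule closure_minimal[rotated])
next
  obtain p where p: "p \<in> solutions K" using assms by blast
  show "{x. \<forall>(a, b, _)\<in>K. a \<bullet> x \<le> b} \<subseteq> closure (solutions K)"
  proof
    fix q assume q: "q \<in> {x. \<forall>(a, b, _)\<in>K. a \<bullet> x \<le> b}"
    have "open_segment p q \<subseteq> solutions K"
      using p q by (force simp: in_segment solutions_def case_prod_beta intro: holds_segment)
    then have "closure (open_segment p q) \<subseteq> closure (solutions K)"
      by (rule closure_mono)
    then show "q \<in> closure (solutions K)"
      using p closure_subset by (cases "p = q") auto
  qed
qed

lemma polyhedron_iff_finite_Union_polytopes: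
  "polyhedron S \<longleftrightarrow> (\<exists>\<F>. finite \<F> \<and> (\<forall>P\<in>\<F>. polytope P) \<and> S = \<Union>\<F>)"
proof
  assume "polyhedron S"
  then obtain F where "finite F" "\<forall>V\<in>F. finite V" "S = \<Union>((\<lambda>V. convex hull V) ` F)"
    unfolding polyhedron_def by blast
  then show "\<exists>\<F>. finite \<F> \<and> (\<forall>P\<in>\<F>. polytope P) \<and> S = \<Union>\<F>"
    by (intro exI[of _ "(\<lambda>V. convex hull V) ` F"]) (auto simp: polytope_def)
next
  assume "\<exists>\<F>. finite \<F> \<and> (\<forall>P\<in>\<F>. polytope P) \<and> S = \<Union>\<F>"
  then obtain \<F> where \<F>: "finite \<F>" "\<forall>P\<in>\<F>. polytope P" "S = \<Union>\<F>"
    by blast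
  then obtain v where "\<forall>P\<in>\<F>. finite (v P) \<and> P = convex hull (v P)"
    unfolding polytope_def by metis
  with \<F> show "polyhedron S"
    unfolding polyhedron_def by (intro exI[of _ "v ` \<F>"]) auto
qed

lemma polyhedron_imp_compact: "polyhedron S \<Longrightarrow> compact S"
  unfolding polyhedron_iff_finite_Union_polytopes by (auto intro: polytope_imp_compact)

lemma polyhedron_imp_semilinear:
  fixes S :: "'a::euclidean_space set"
  assumes "polyhedron S"
  shows "semilinear S"
proof -
  have "semilinear P" if "polytope P" for P :: "'a set"
    using polytope_imp_polyhedron[OF that] unfolding Polytope.polyhedron_def
    by (auto intro!: semilinear_Inter semilinear_halfspace_le)
  then show ?thesis
    using assms unfolding polyhedron_iff_finite_Union_polytopes by (auto intro: semilinear_Union)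
qed

lemma compact_semilinear_imp_polyhedron:
  fixes S :: "'a::euclidean_space set"
  assumes "semilinear S" "compact S"
  shows "polyhedron S"
proof -
  obtain F :: "'a constraint set set" where F: "finite F" "\<forall>K\<in>F. finite K" "S = \<Union>(solutions ` F)"
    using assms(1) unfolding semilinear_def by blast
  have closure_le: "closure (solutions K) \<subseteq> S" if "K \<in> F" for K
    using that F(3) assms(2) by (intro closure_minimal) (auto simp: compact_imp_closed)
  then have S_eq: "S = (\<Union>K\<in>F. closure (solutions K))"
    using F(3) closure_subset by blast
  have "polytope (closure (solutions K))" if "K \<in> F" for K
  proof (cases "solutions K = {}")
    case False
    have "Polytope.polyhedron {x. \<forall>(a, b, _)\<in>K. a \<bullet> x \<le> b}"
      using F(2) that by (auto simp: case_prod_beta Collect_ball_eq intro!: polyhedron_halfspace_le)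
    moreover have "bounded (closure (solutions K))"
      using closure_le[OF that] compact_imp_bounded[OF assms(2)] by (rule bounded_subset[rotated])
    ultimately show ?thesis
      using False by (simp add: closure_solutions polytope_eq_bounded_polyhedron)
  qed (simp add: polytope_empty)
  then show ?thesis
    unfolding polyhedron_iff_finite_Union_polytopes
    using S_eq F(1) by (intro exI[of _ "(\<lambda>K. closure (solutions K)) ` F"]) auto
qed

lemma polyhedral_map_if_semilinear_vimage:
  fixes g :: "real^'n \<Rightarrow> real^'n"
  assumes cont: "continuous_on UNIV g"
    and maps_to: "g ` open_unit_cube \<subseteq> unit_cube"
    and semilinear_vimage: "\<And>S. semilinear S \<Longrightarrow> semilinear (g -` S)"
  shows "polyhedral_map g"
  unfolding polyhedral_map_def
proof
  fix V :: "(real^'n) set" assume "V \<in> Sub_o unit_cube"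
  then obtain R where R: "V = unit_cube - R" "polyhedron R"
    unfolding Sub_o_def by blast
  define R' where "R' = unit_cube \<inter> g -` R"
  have "closed (g -` R)"
    using cont R(2)
    by (intro continuous_closed_vimage compact_imp_closed polyhedron_imp_compact)
      (auto simp: continuous_on_eq_continuous_at)
  then have "compact R'"
    unfolding R'_def by (intro compact_Int_closed compact_cbox)
  moreover have "semilinear R'"
    unfolding R'_def using R(2)
    by (intro semilinear_Int semilinear_cbox semilinear_vimage polyhedron_imp_semilinear)
  ultimately have "unit_cube - R' \<in> Sub_o unit_cube"
    unfolding Sub_o_def R'_def by (auto intro!: compact_semilinear_imp_polyhedron)
  moreover have "{x \<in> open_unit_cube. g x \<in> V} = (unit_cube - R') \<inter> open_unit_cube"
    using maps_to box_subset_cbox[of 0 1] by (auto simp: R(1) R'_def)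
  ultimately show "{x \<in> open_unit_cube. g x \<in> V} \<in> Sub_o_open_cube"
    unfolding Sub_o_open_cube_def by blast
qed

lemma open_polyhedral_map_if_semilinear_image:
  fixes g :: "real^'n \<Rightarrow> real^'n"
  assumes open_map: "\<And>U. open U \<Longrightarrow> U \<subseteq> open_unit_cube \<Longrightarrow> openin (top_of_set unit_cube) (g ` U)"
    and semilinear_image: "\<And>S. semilinear S \<Longrightarrow> semilinear (g ` S)"
  shows "open_polyhedral_map g"
  unfolding open_polyhedral_map_def
proof
  fix U :: "(real^'n) set" assume "U \<in> Sub_o_open_cube"
  then obtain R where R: "U = open_unit_cube - R" "polyhedron R"
    unfolding Sub_o_open_cube_def Sub_o_def using box_subset_cbox[of 0 1] by blast
  define R' where "R' = unit_cube - g ` U"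
  have image_open: "openin (top_of_set unit_cube) (g ` U)"
    using R polyhedron_imp_compact by (intro open_map) (auto intro: open_Diff compact_imp_closed)
  then have "closedin (top_of_set unit_cube) R'"
    unfolding R'_def using closedin_diff[OF closedin_topspace image_open] by simp
  then have "closed R'"
    using closedin_closed_trans closed_cbox by blast
  then have "compact R'"
    by (simp add: R'_def compact_eq_bounded_closed bounded_diff)
  moreover have "semilinear R'"
    unfolding R'_def R(1) using R(2)
    by (intro semilinear_Diff semilinear_cbox semilinear_image semilinear_box polyhedron_imp_semilinear)
  ultimately have "unit_cube - R' \<in> Sub_o unit_cube"
    unfolding Sub_o_def R'_def by (auto intro!: compact_semilinear_imp_polyhedron)
  moreover have "g ` U \<subseteq> unit_cube"
    using openin_imp_subset[OF image_open] by simp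
  ultimately show "g ` U \<in> Sub_o unit_cube"
    unfolding R'_def by (simp add: Diff_Diff_Int inf.absorb2)
qed

definition sign_bool :: "bool \<Rightarrow> real" where
  "sign_bool b = (if b then 1 else -1)"

lemma abs_eq_sign_bool: "0 \<le> sign_bool b * u \<Longrightarrow> \<bar>u\<bar> = sign_bool b * u"
  by (cases b) (auto simp: sign_bool_def)

definition zigzag :: "real \<Rightarrow> real" where
  "zigzag t = \<bar>\<bar>4 * t - 2\<bar> - 1\<bar>"

text \<open>The two booleans fix the signs inside the two absolute values of \<^const>\<open>zigzag\<close>,
  so the four branches are its linear pieces.\<close>

definition zigzag_branch :: "bool \<times> bool \<Rightarrow> real \<Rightarrow> real" where
  "zigzag_branch q t = sign_bool (snd q) * (sign_bool (fst q) * (4 * t - 2) - 1)"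

definition zigzag_piece :: "bool \<times> bool \<Rightarrow> real set" where
  "zigzag_piece q = {t. 0 \<le> sign_bool (fst q) * (4 * t - 2) \<and> 0 \<le> zigzag_branch q t}"

lemma zigzag_eq_branch:
  assumes "t \<in> zigzag_piece q"
  shows "zigzag t = zigzag_branch q t"
proof -
  have "\<bar>4 * t - 2\<bar> = sign_bool (fst q) * (4 * t - 2)"
    using assms by (simp add: zigzag_piece_def abs_eq_sign_bool)
  moreover have "0 \<le> sign_bool (snd q) * (sign_bool (fst q) * (4 * t - 2) - 1)"
    using assms by (simp add: zigzag_piece_def zigzag_branch_def)
  ultimately show ?thesis
    unfolding zigzag_def zigzag_branch_def by (simp only: abs_eq_sign_bool)
qed

lemma zigzag_pieces_cover: "\<exists>q. t \<in> zigzag_piece q"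
proof -
  let ?q = "(0 \<le> 4 * t - 2, 0 \<le> \<bar>4 * t - 2\<bar> - 1)"
  have "t \<in> zigzag_piece ?q"
    by (auto simp: zigzag_piece_def zigzag_branch_def sign_bool_def)
  then show ?thesis ..
qed

definition zigzag_slope :: "bool \<times> bool \<Rightarrow> real" where
  "zigzag_slope q = 4 * sign_bool (fst q) * sign_bool (snd q)"

definition zigzag_offset :: "bool \<times> bool \<Rightarrow> real" where
  "zigzag_offset q = - sign_bool (snd q) * (2 * sign_bool (fst q) + 1)"

lemma zigzag_branch_affine: "zigzag_branch q t = zigzag_slope q * t + zigzag_offset q"
  by (simp add: zigzag_branch_def zigzag_slope_def zigzag_offset_def algebra_simps)

lemma abs_zigzag_slope: "\<bar>zigzag_slope q\<bar> = 4"
  by (simp add: zigzag_slope_def sign_bool_def)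

lemma zigzag_slope_nonzero: "zigzag_slope q \<noteq> 0"
  by (simp add: zigzag_slope_def sign_bool_def)

lemma zigzag_piece_halfspaces:
  "zigzag_piece q =
     {t. 2 * sign_bool (fst q) \<le> 4 * sign_bool (fst q) * t} \<inter>
     {t. - zigzag_offset q \<le> zigzag_slope q * t}"
  by (auto simp: zigzag_piece_def zigzag_branch_affine algebra_simps)

text \<open>The branch through \<open>s\<close> is an affine bijection of slope \<open>\<plusminus>4\<close> whose piece contains
  its whole preimage of \<open>[0, 1]\<close>, so \<open>t\<close> is attained on that piece, at a quarter of the
  distance in value.\<close>
lemma zigzag_lift:
  assumes "0 \<le> t" "t \<le> 1"
  shows "\<exists>s'. zigzag s' = t \<and> \<bar>s' - s\<bar> = \<bar>t - zigzag s\<bar> / 4"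
proof -
  obtain q where q: "s \<in> zigzag_piece q"
    using zigzag_pieces_cover by blast
  define s' where "s' = (sign_bool (fst q) * (sign_bool (snd q) * t + 1) + 2) / 4"
  have outer: "sign_bool (fst q) * (4 * s' - 2) = sign_bool (snd q) * t + 1"
    by (cases "fst q"; cases "snd q") (simp_all add: s'_def sign_bool_def field_simps)
  then have branch: "zigzag_branch q s' = t"
    by (cases "snd q") (simp_all add: zigzag_branch_def sign_bool_def)
  have "0 \<le> sign_bool (snd q) * t + 1"
    using assms by (auto simp: sign_bool_def)
  then have "s' \<in> zigzag_piece q"
    using outer branch assms(1) by (simp add: zigzag_piece_def)
  then have "zigzag s' = t"
    using branch by (simp add: zigzag_eq_branch)
  moreover have "t - zigzag s = zigzag_slope q * (s' - s)"
    using branch zigzag_eq_branch[OF q] by (simp add: zigzag_branch_affine algebra_simps)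
  then have "\<bar>t - zigzag s\<bar> = 4 * \<bar>s' - s\<bar>"
    by (simp add: abs_mult abs_zigzag_slope)
  ultimately show ?thesis by auto
qed

lemma zigzag_range: "0 < t \<Longrightarrow> t < 1 \<Longrightarrow> 0 \<le> zigzag t \<and> zigzag t \<le> 1"
  by (auto simp: zigzag_def abs_if)

definition zigzag_map :: "real^'n \<Rightarrow> real^'n" where
  "zigzag_map x = (\<chi> i. zigzag (x $ i))"

lemma zigzag_map_open_cube: "zigzag_map ` open_unit_cube = unit_cube"
proof
  show "zigzag_map ` open_unit_cube \<subseteq> unit_cube"
    by (auto simp: mem_box_cart zigzag_map_def zigzag_range)
next
  show "unit_cube \<subseteq> zigzag_map ` open_unit_cube"
  proof
    fix y :: "real^'n" assume "y \<in> unit_cube"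
    then have "\<exists>s. zigzag s = y $ i \<and> \<bar>s - 1/2\<bar> = \<bar>y $ i - 1\<bar> / 4" for i
      using zigzag_lift[of "y $ i" "1/2"] by (simp add: mem_box_cart zigzag_def)
    then obtain x where x: "\<And>i. zigzag (x i) = y $ i \<and> \<bar>x i - 1/2\<bar> = \<bar>y $ i - 1\<bar> / 4"
      by metis
    have near_half: "\<bar>x i - 1/2\<bar> \<le> 1/4" for i
      using \<open>y \<in> unit_cube\<close> x[of i] by (simp add: mem_box_cart)
    have "0 < x i \<and> x i < 1" for i
      using near_half[of i] unfolding abs_le_iff by linarith
    then have "(\<chi> i. x i) \<in> open_unit_cube"
      by (simp add: mem_box_cart)
    moreover have "zigzag_map (\<chi> i. x i) = y"
      using x by (simp add: zigzag_map_def vec_eq_iff)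
    ultimately show "y \<in> zigzag_map ` open_unit_cube" by blast
  qed
qed

lemma continuous_zigzag_map: "continuous_on UNIV zigzag_map"
  unfolding zigzag_map_def zigzag_def by (intro continuous_intros)

lemma openin_zigzag_map_image:
  fixes U :: "(real^'n) set"
  assumes "open U" "U \<subseteq> open_unit_cube"
  shows "openin (top_of_set unit_cube) (zigzag_map ` U)"
  unfolding openin_euclidean_subtopology_iff
proof (intro conjI ballI)
  show "zigzag_map ` U \<subseteq> unit_cube"
    using assms(2) zigzag_map_open_cube by blast
next
  fix y assume "y \<in> zigzag_map ` U"
  then obtain x where x: "x \<in> U" "y = zigzag_map x" by blast
  obtain d where d: "d > 0" "ball x d \<subseteq> U"
    using assms(1) x(1) open_contains_ball by blast
  show "\<exists>e>0. \<forall>y'\<in>unit_cube. dist y' y < e \<longrightarrow> y' \<in> zigzag_map ` U"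
  proof (intro exI[of _ d] conjI d ballI impI)
    fix y' :: "real^'n" assume y': "y' \<in> unit_cube" "dist y' y < d"
    have "\<exists>s. zigzag s = y' $ i \<and> \<bar>s - x $ i\<bar> = \<bar>y' $ i - zigzag (x $ i)\<bar> / 4" for i
      using y'(1) by (intro zigzag_lift) (auto simp: mem_box_cart)
    then obtain x' where x': "\<And>i. zigzag (x' i) = y' $ i"
      "\<And>i. \<bar>x' i - x $ i\<bar> = \<bar>y' $ i - zigzag (x $ i)\<bar> / 4"
      by metis
    have "\<bar>x' i - x $ i\<bar> \<le> \<bar>y' $ i - zigzag (x $ i)\<bar>" for i
      by (simp add: x'(2))
    then have "norm ((\<chi> i. x' i) - x) \<le> norm (y' - y)"
      using x(2) by (intro norm_le_componentwise_cart) (simp add: zigzag_map_def)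
    then have "(\<chi> i. x' i) \<in> U"
      using y'(2) d(2) by (auto simp: dist_norm norm_minus_commute)
    moreover have "zigzag_map (\<chi> i. x' i) = y'"
      using x' by (simp add: zigzag_map_def vec_eq_iff)
    ultimately show "y' \<in> zigzag_map ` U" by blast
  qed
qed

lemma linear_diagonal: "linear (\<lambda>x::real^'n. \<chi> i. c i * x $ i)"
  by (auto intro!: linearI simp: vec_eq_iff algebra_simps)

lemma inj_diagonal: "(\<And>i. c i \<noteq> 0) \<Longrightarrow> inj (\<lambda>x::real^'n. \<chi> i. c i * x $ i)"
  by (auto intro!: injI simp: vec_eq_iff)

definition zigzag_region :: "('n \<Rightarrow> bool \<times> bool) \<Rightarrow> (real^'n) set" where
  "zigzag_region p = {x. \<forall>i. x $ i \<in> zigzag_piece (p i)}"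

definition zigzag_branch_map :: "('n \<Rightarrow> bool \<times> bool) \<Rightarrow> real^'n \<Rightarrow> real^'n" where
  "zigzag_branch_map p x = (\<chi> i. zigzag_branch (p i) (x $ i))"

lemma semilinear_zigzag_region: "semilinear (zigzag_region p)"
proof -
  let ?H = "\<lambda>i. {x. 2 * sign_bool (fst (p i)) \<le> 4 * sign_bool (fst (p i)) * x $ i}
      \<inter> {x. - zigzag_offset (p i) \<le> zigzag_slope (p i) * x $ i}"
  have "zigzag_region p = (\<Inter>i. ?H i)"
    unfolding zigzag_region_def zigzag_piece_halfspaces by blast
  moreover have "semilinear (?H i)" for i
    by (intro semilinear_Int semilinear_coordinate_halfspace)
  ultimately show ?thesis
    by (auto intro: semilinear_Inter)
qed

lemma zigzag_branch_map_affine: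
  "zigzag_branch_map p = (\<lambda>x. (\<chi> i. zigzag_slope (p i) * x $ i) + (\<chi> i. zigzag_offset (p i)))"
  by (simp add: fun_eq_iff vec_eq_iff zigzag_branch_map_def zigzag_branch_affine)

lemma zigzag_map_eq_branch_map: "x \<in> zigzag_region p \<Longrightarrow> zigzag_map x = zigzag_branch_map p x"
  by (simp add: zigzag_region_def zigzag_map_def zigzag_branch_map_def zigzag_eq_branch vec_eq_iff)

lemma zigzag_regions_cover: "\<exists>p. x \<in> zigzag_region p"
proof -
  have "\<exists>p. \<forall>i. x $ i \<in> zigzag_piece (p i)"
    by (rule choice) (use zigzag_pieces_cover in blast)
  then show ?thesis
    unfolding zigzag_region_def by simp
qed

lemma zigzag_map_image:
  "zigzag_map ` S = (\<Union>p. zigzag_branch_map p ` (S \<inter> zigzag_region p))"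
proof (intro equalityI subsetI)
  fix y assume "y \<in> zigzag_map ` S"
  then obtain x where "x \<in> S" "y = zigzag_map x" by blast
  moreover obtain p where "x \<in> zigzag_region p"
    using zigzag_regions_cover by blast
  ultimately show "y \<in> (\<Union>p. zigzag_branch_map p ` (S \<inter> zigzag_region p))"
    using zigzag_map_eq_branch_map by blast
next
  fix y assume "y \<in> (\<Union>p. zigzag_branch_map p ` (S \<inter> zigzag_region p))"
  then obtain p x where "x \<in> S" "x \<in> zigzag_region p" "y = zigzag_branch_map p x"
    by blast
  then show "y \<in> zigzag_map ` S"
    using zigzag_map_eq_branch_map by (metis image_eqI)
qed

lemma zigzag_map_vimage:
  "zigzag_map -` S = (\<Union>p. zigzag_region p \<inter> zigzag_branch_map p -` S)"
proof (intro equalityI subsetI)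
  fix x assume "x \<in> zigzag_map -` S"
  moreover obtain p where "x \<in> zigzag_region p"
    using zigzag_regions_cover by blast
  ultimately show "x \<in> (\<Union>p. zigzag_region p \<inter> zigzag_branch_map p -` S)"
    by (auto simp: zigzag_map_eq_branch_map)
qed (auto simp: zigzag_map_eq_branch_map)

lemma semilinear_zigzag_map_image:
  assumes "semilinear S"
  shows "semilinear (zigzag_map ` S)"
  unfolding zigzag_map_image zigzag_branch_map_affine
  using assms
  by (auto simp: zigzag_slope_nonzero intro!: semilinear_Union semilinear_affine_image
      semilinear_Int semilinear_zigzag_region linear_diagonal inj_diagonal)

lemma semilinear_zigzag_map_vimage:
  assumes "semilinear S"
  shows "semilinear (zigzag_map -` S)"
  unfolding zigzag_map_vimage zigzag_branch_map_affine
  using assms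
  by (auto intro!: semilinear_Union semilinear_affine_vimage
      semilinear_Int semilinear_zigzag_region linear_diagonal)

theorem lemma5p7:
  shows "\<exists>g :: real^'n \<Rightarrow> real^'n.
           g ` open_unit_cube = unit_cube \<and> polyhedral_map g \<and> open_polyhedral_map g"
proof (intro exI conjI)
  show "zigzag_map ` open_unit_cube = unit_cube"
    by (rule zigzag_map_open_cube)
  show "polyhedral_map zigzag_map"
    using continuous_zigzag_map zigzag_map_open_cube semilinear_zigzag_map_vimage
    by (intro polyhedral_map_if_semilinear_vimage) auto
  show "open_polyhedral_map zigzag_map"
    using openin_zigzag_map_image semilinear_zigzag_map_image
    by (intro open_polyhedral_map_if_semilinear_image)
qed

end
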